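(* Fix bidder $i$ and $v_{-i}$, and assume $f_{i,k}>0$ for all $k$. Suppose $k\mapsto x_i(z_{i,k},v_{-i})$ is non-decreasing and the actual payments $p_i(z_{i,k},v_{-i})\ge 0$ satisfy $p_i(z_{i,\ell},v_{-i})^2= z_{i,\ell}x_i(z_{i,\ell},v_{-i})-\sum_{j=1}^{\ell-1}(z_{i,j+1}-z_{i,j})x_i(z_{i,j},v_{-i})$ for all $\ell$. Then $$\sqrt{\sum_{k=1}^{K_i} f_{i,k}\,\varphi_{i,k}\,x_i(z_{i,k},v_{-i})}\ \ge\ \sum_{k=1}^{K_i} f_{i,k}\,p_i(z_{i,k},v_{-i}).$$
   Context: Bidder $i$'s type space is $V_i=\{z_{i,1}<\dots<z_{i,K_i}\}\subset[0,\infty)$, with the convention $z_{i,K_i+1}=z_{i,K_i}$; $f_{i,k}$ is the probability of $z_{i,k}$ and $F_{i,k}=\sum_{j\le k}f_{i,j}$. The (discrete) virtual value is $\varphi_{i,k}=z_{i,k}-(z_{i,k+1}-z_{i,k})\frac{1-F_{i,k}}{f_{i,k}}$. $x_i(\cdot,v_{-i}):V_i\to[0,1]$ is bidder $i$'s allocation given the others' types. *)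

theory Defs
  imports Complex_Main
begin

text \<open>Types of bidder i are z 1 < ... < z K (indices 1..K); f k is the probability of z k.
  Convention z (K+1) = z K is built into znext.\<close>

definition znext :: "nat \<Rightarrow> (nat \<Rightarrow> real) \<Rightarrow> nat \<Rightarrow> real" where
  "znext K z k = (if k < K then z (k+1) else z K)"

definition cdf :: "(nat \<Rightarrow> real) \<Rightarrow> nat \<Rightarrow> real" where
  "cdf f k = (\<Sum>j=1..k. f j)"

definition virtual_value :: "nat \<Rightarrow> (nat \<Rightarrow> real) \<Rightarrow> (nat \<Rightarrow> real) \<Rightarrow> nat \<Rightarrow> real" where
  "virtual_value K z f k = z k - (znext K z k - z k) * (1 - cdf f k) / f k"

end

theory Submission
  imports Defs
begin

text \<open>Summation by parts turns the expected virtual welfare \<open>\<Sum>k. f k * \<phi> k * x k\<close>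
  into \<open>\<Sum>k. f k * (z k * x k - \<Sum>j<k. (z (j+1) - z j) * x j)\<close>, which by the payment
  identity is the second moment \<open>\<Sum>k. f k * p k\<^sup>2\<close> of the payment. The claim is then
  \<open>(E p)\<^sup>2 \<le> E (p\<^sup>2)\<close>, i.e. nonnegativity of the variance.\<close>

lemma sum_mult_sum_lessThan_swap:
  fixes f g :: "nat \<Rightarrow> real"
  shows "(\<Sum>k=1..n. f k * (\<Sum>j=1..<k. g j)) = (\<Sum>j=1..<n. g j * (\<Sum>k=j+1..n. f k))"
proof (induction n)
  case 0
  then show ?case by simp
next
  case (Suc n)
  have "(\<Sum>j=1..<Suc n. g j * (\<Sum>k=j+1..Suc n. f k))
      = (\<Sum>j=1..<Suc n. g j * (\<Sum>k=j+1..n. f k)) + f (Suc n) * (\<Sum>j=1..<Suc n. g j)"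
    by (simp add: distrib_left sum.distrib sum_distrib_left mult.commute)
  also have "(\<Sum>j=1..<Suc n. g j * (\<Sum>k=j+1..n. f k)) = (\<Sum>j=1..<n. g j * (\<Sum>k=j+1..n. f k))"
    by (cases n) auto
  finally show ?case
    using Suc by simp
qed

lemma one_minus_cdf:
  assumes "(\<Sum>k=1..K. f k) = 1" and "j \<le> K"
  shows "1 - cdf f j = (\<Sum>k=j+1..K. f k)"
proof -
  have "(\<Sum>k=1..K. f k) = (\<Sum>k=1..j. f k) + (\<Sum>k=j+1..K. f k)"
    using assms(2) sum.ub_add_nat[of 1 j f "K - j"] by simp
  then show ?thesis
    using assms(1) by (simp add: cdf_def)
qed

lemma expected_virtual_value:
  fixes z f x :: "nat \<Rightarrow> real"
  assumes f_nonzero: "\<forall>k\<in>{1..K}. f k \<noteq> 0" and f_sum: "(\<Sum>k=1..K. f k) = 1"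
  shows "(\<Sum>k=1..K. f k * virtual_value K z f k * x k)
       = (\<Sum>k=1..K. f k * (z k * x k - (\<Sum>j=1..<k. (z (j+1) - z j) * x j)))"
proof -
  define g where "g j = (z (j+1) - z j) * x j" for j
  define info_rent where "info_rent k = (znext K z k - z k) * (1 - cdf f k) * x k" for k
  have "(\<Sum>k=1..K. f k * virtual_value K z f k * x k) = (\<Sum>k=1..K. f k * z k * x k - info_rent k)"
    using f_nonzero by (intro sum.cong) (auto simp: virtual_value_def info_rent_def field_simps)
  moreover have "(\<Sum>k=1..K. info_rent k) = (\<Sum>k=1..<K. info_rent k)"
    \<comment> \<open>the top type pays no rent, as \<open>znext K z K = z K\<close>\<close>
    by (cases K) (simp_all add: info_rent_def znext_def atLeastLessThanSuc_atLeastAtMost)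
  moreover have "(\<Sum>k=1..<K. info_rent k) = (\<Sum>j=1..<K. g j * (\<Sum>k=j+1..K. f k))"
    using f_sum by (intro sum.cong) (auto simp: info_rent_def znext_def g_def one_minus_cdf)
  ultimately show ?thesis
    unfolding sum_mult_sum_lessThan_swap[symmetric] g_def
    by (simp add: sum_subtractf right_diff_distrib mult.assoc)
qed

lemma square_weighted_mean_le:
  fixes f p :: "'a \<Rightarrow> real"
  assumes "\<forall>k\<in>A. f k \<ge> 0" and "sum f A = 1"
  shows "(\<Sum>k\<in>A. f k * p k)\<^sup>2 \<le> (\<Sum>k\<in>A. f k * (p k)\<^sup>2)"
proof -
  define m where "m = (\<Sum>k\<in>A. f k * p k)"
  have "0 \<le> (\<Sum>k\<in>A. f k * (p k - m)\<^sup>2)"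
    using assms(1) by (intro sum_nonneg) simp
  also have "\<dots> = (\<Sum>k\<in>A. f k * (p k)\<^sup>2 - 2 * m * (f k * p k) + m\<^sup>2 * f k)"
    by (intro sum.cong) (auto simp: power2_eq_square algebra_simps)
  also have "\<dots> = (\<Sum>k\<in>A. f k * (p k)\<^sup>2) - m\<^sup>2"
    using assms(2)
    by (simp add: sum.distrib sum_subtractf sum_distrib_left[symmetric] m_def power2_eq_square)
  finally show ?thesis
    by (simp add: m_def)
qed

theorem mainTheorem4:
  fixes K :: nat and z f x p :: "nat \<Rightarrow> real"
  assumes K: "K \<ge> 1"
    and z_nonneg: "\<forall>k\<in>{1..K}. z k \<ge> 0"
    and z_strict: "\<forall>k\<in>{1..K}. \<forall>l\<in>{1..K}. k < l \<longrightarrow> z k < z l"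
    and f_pos: "\<forall>k\<in>{1..K}. f k > 0"
    and f_sum: "(\<Sum>k=1..K. f k) = 1"
    and x_range: "\<forall>k\<in>{1..K}. 0 \<le> x k \<and> x k \<le> 1"
    and x_mono: "\<forall>k\<in>{1..K}. \<forall>l\<in>{1..K}. k \<le> l \<longrightarrow> x k \<le> x l"
    and p_nonneg: "\<forall>k\<in>{1..K}. p k \<ge> 0"
    and p_eq: "\<forall>l\<in>{1..K}. (p l)\<^sup>2 = z l * x l - (\<Sum>j=1..<l. (z (j+1) - z j) * x j)"
  shows "sqrt (\<Sum>k=1..K. f k * virtual_value K z f k * x k) \<ge> (\<Sum>k=1..K. f k * p k)"
proof -
  have "(\<Sum>k=1..K. f k * virtual_value K z f k * x k)
      = (\<Sum>k=1..K. f k * (z k * x k - (\<Sum>j=1..<k. (z (j+1) - z j) * x j)))"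
    using f_pos f_sum by (intro expected_virtual_value) auto
  also have "\<dots> = (\<Sum>k=1..K. f k * (p k)\<^sup>2)"
    using p_eq by (intro sum.cong) auto
  finally have "(\<Sum>k=1..K. f k * virtual_value K z f k * x k) = (\<Sum>k=1..K. f k * (p k)\<^sup>2)" .
  moreover have "(\<Sum>k=1..K. f k * p k)\<^sup>2 \<le> (\<Sum>k=1..K. f k * (p k)\<^sup>2)"
    using f_pos f_sum by (intro square_weighted_mean_le) auto
  ultimately show ?thesis
    by (metis real_le_rsqrt)
qed

end
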